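(* Let $p,q$ be two distinct prime numbers and $l$ a positive odd integer. Then $\dfrac{-1}{p}\in\mathbb{Q}\text{-}\mathcal{KS}(q^{l})$ if and only if $\dfrac{-1}{q}\in\mathbb{Q}\text{-}\mathcal{KS}(p^{l})$.
   Context: Every nonzero rational $\alpha$ is written $\alpha=\alpha_1/\alpha_2$ with $\alpha_1\in\mathbb{Z}$, $\alpha_2$ a positive integer and $\gcd(\alpha_1,\alpha_2)=1$. For an integer $N\ge 2$ and a nonzero rational $\alpha=\alpha_1/\alpha_2$, $N$ is called an $\alpha$-Korselt number if $N\neq\alpha$ and $\alpha_2r-\alpha_1$ divides $\alpha_2N-\alpha_1$ (in $\mathbb{Z}$) for every prime divisor $r$ of $N$. $\mathbb{Q}\text{-}\mathcal{KS}(N)$ is the set of all $\beta\in\mathbb{Q}\setminus\{0,N\}$ such that $N$ is a $\beta$-Korselt number. *)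

theory Defs
  imports Complex_Main "HOL-Computational_Algebra.Primes"
begin

text \<open>N is an alpha-Korselt number, alpha = a1/a2 in lowest terms with a2 > 0
  (Isabelle's quotient_of gives exactly this normalized representation).\<close>
definition Korselt :: "nat \<Rightarrow> rat \<Rightarrow> bool" where
  "Korselt N \<alpha> \<longleftrightarrow> N \<ge> 2 \<and> \<alpha> \<noteq> 0 \<and> \<alpha> \<noteq> of_nat N \<and>
     (let (a1, a2) = quotient_of \<alpha> in
      \<forall>r::nat. prime r \<and> r dvd N \<longrightarrow> (a2 * int r - a1) dvd (a2 * int N - a1))"

definition QKS :: "nat \<Rightarrow> rat set" where
  "QKS N = {\<beta>. \<beta> \<noteq> 0 \<and> \<beta> \<noteq> of_nat N \<and> Korselt N \<beta>}"

end

theory Submission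
  imports Defs
begin

text \<open>Since q is the only prime factor of q^l and -1/p is in lowest terms with denominator p,
  the condition -1/p \<in> Q-KS(q^l) reduces to the single divisibility m | pq^l + 1, where
  m = pq + 1. Writing l = 2k + 1, we have pq^l + 1 = q^2k m - (q^2k - 1), so this is
  m | q^2k - 1; symmetrically the other side is m | p^2k - 1. As pq \<equiv> -1 (mod m),
  m divides (pq)^2k - 1 = p^2k (q^2k - 1) + (p^2k - 1), making the two conditions equivalent.\<close>

lemma quotient_of_minus_one_div_of_nat:
  assumes "n > 0"
  shows "quotient_of (-1 / of_nat n :: rat) = (-1, int n)"
proof -
  have "(-1 / of_nat n :: rat) = Fract (-1) (int n)"
    by (simp add: Fract_of_int_quotient)
  then show ?thesis
    using assms by (simp add: quotient_of_Fract normalize_def)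
qed

lemma Korselt_prime_power_iff:
  assumes "prime q" and "l > 0"
  shows "Korselt (q ^ l) \<alpha> \<longleftrightarrow> \<alpha> \<noteq> 0 \<and> \<alpha> \<noteq> of_nat (q ^ l) \<and>
           (let (a1, a2) = quotient_of \<alpha> in (a2 * int q - a1) dvd (a2 * int q ^ l - a1))"
proof -
  have "q ^ l \<ge> 2"
    using assms prime_ge_2_nat[of q] self_le_power[of q l] by linarith
  moreover have "prime r \<and> r dvd q ^ l \<longleftrightarrow> r = q" for r :: nat
  proof
    assume "prime r \<and> r dvd q ^ l"
    then show "r = q"
      using assms(1) prime_dvd_power primes_dvd_imp_eq by blast
  qed (use assms in simp)
  ultimately show ?thesis
    unfolding Korselt_def by (simp add: case_prod_beta)
qed

lemma minus_inverse_in_QKS_prime_power_iff: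
  assumes "p > 0" and "prime q" and "l > 0"
  shows "(-1 / of_nat p :: rat) \<in> QKS (q ^ l) \<longleftrightarrow>
           int p * int q + 1 dvd int p * int q ^ l + 1"
proof -
  have "(-1 / of_nat p :: rat) < 0"
    using assms(1) by simp
  then have "(-1 / of_nat p :: rat) \<noteq> 0 \<and> (-1 / of_nat p :: rat) \<noteq> of_nat (q ^ l)"
    by (metis of_nat_0_le_iff order_less_le_trans order_less_irrefl)
  then show ?thesis
    unfolding QKS_def mem_Collect_eq Korselt_prime_power_iff[OF assms(2,3)]
      quotient_of_minus_one_div_of_nat[OF assms(1)]
    by simp
qed

lemma add_one_dvd_power_even_minus_one:
  fixes x :: "'a::comm_ring_1"
  shows "x + 1 dvd x ^ (2 * k) - 1"
proof -
  have "x ^ (2 * k) - 1 = (x + 1) * ((x - 1) * (\<Sum>i<k. (x\<^sup>2) ^ i))"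
    using power_diff_1_eq[of "x\<^sup>2" k]
    by (simp add: power_mult power2_eq_square algebra_simps)
  then show ?thesis
    by simp
qed

lemma dvd_power_minus_one_iff_of_dvd_mult_power_minus_one:
  fixes a b m :: "'a::comm_ring_1"
  assumes "m dvd (a * b) ^ n - 1"
  shows "m dvd a ^ n - 1 \<longleftrightarrow> m dvd b ^ n - 1"
proof -
  have "(a * b) ^ n - 1 = a ^ n * (b ^ n - 1) + (a ^ n - 1)"
   and "(a * b) ^ n - 1 = b ^ n * (a ^ n - 1) + (b ^ n - 1)"
    by (simp_all add: algebra_simps)
  then show ?thesis
    using assms by (metis dvd_add_right_iff dvd_mult)
qed

lemma mult_add_one_dvd_odd_power_swap:
  fixes a b :: "'a::comm_ring_1"
  assumes "odd l"
  shows "a * b + 1 dvd a * b ^ l + 1 \<longleftrightarrow> a * b + 1 dvd b * a ^ l + 1"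
proof -
  obtain k where l: "l = 2 * k + 1"
    using assms oddE by blast
  have expand_b: "a * b ^ l + 1 = b ^ (2 * k) * (a * b + 1) - (b ^ (2 * k) - 1)"
   and expand_a: "b * a ^ l + 1 = a ^ (2 * k) * (a * b + 1) - (a ^ (2 * k) - 1)"
    unfolding l by (simp_all add: algebra_simps)
  have "a * b + 1 dvd a * b ^ l + 1 \<longleftrightarrow> a * b + 1 dvd b ^ (2 * k) - 1"
    unfolding expand_b by (rule dvd_diff_right_iff) simp
  moreover have "a * b + 1 dvd b * a ^ l + 1 \<longleftrightarrow> a * b + 1 dvd a ^ (2 * k) - 1"
    unfolding expand_a by (rule dvd_diff_right_iff) simp
  moreover have "a * b + 1 dvd (a * b) ^ (2 * k) - 1"
    by (rule add_one_dvd_power_even_minus_one)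
  ultimately show ?thesis
    using dvd_power_minus_one_iff_of_dvd_mult_power_minus_one by blast
qed

theorem proposition5p4:
  fixes p q l :: nat
  assumes "prime p" and "prime q" and "p \<noteq> q" and "l > 0" and "odd l"
  shows "(-1 / of_nat p :: rat) \<in> QKS (q ^ l) \<longleftrightarrow> (-1 / of_nat q :: rat) \<in> QKS (p ^ l)"
proof -
  have "p > 0" and "q > 0"
    using assms(1,2) prime_gt_0_nat by blast+
  then show ?thesis
    using minus_inverse_in_QKS_prime_power_iff assms
      mult_add_one_dvd_odd_power_swap[OF assms(5), of "int p" "int q"]
    by (simp add: mult.commute)
qed

end
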